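(* Let $\varphi:\mathbb{R}\to\mathbb{R}$ be smooth with at most quadratic growth, and let $\Sigma$ be a properly immersed $[\varphi,\vec e_3]$-minimal surface in $\mathbb{R}^3$. Let $H_1,H_2$ be closed half-spaces of $\mathbb{R}^3$ whose boundary planes are vertical (i.e., contain the direction $\vec e_3$) and not parallel to each other. Then $\Sigma$ is not contained in $H_1\cap H_2$.
   Context: Surfaces are connected, orientable, immersed in $\mathbb{R}^3$, without boundary, with unit normal $N$; $\{\vec e_1,\vec e_2,\vec e_3\}$ is the standard basis. For a surface $\Sigma$, $\mu(p)=\langle p,\vec e_3\rangle$ is the height function and $\eta=\langle N,\vec e_3\rangle$ the angle function. Given a smooth $\varphi:\mathbb{R}\to\mathbb{R}$, $\Sigma$ is called $[\varphi,\vec e_3]$-minimal if its mean curvature vector $\vec H$ (trace of the second fundamental form, equal to the Laplacian of the position vector) satisfies $\vec H=\dot\varphi(\mu)\,\eta\,N$; equivalently, writing $\vec H=-HN$, $H=-\dot\varphi(\mu)\eta$. "At most quadratic growth" means there is $C>0$ with $|\dot\varphi(t)|\le C(1+|t|)$ for all $t\in\mathbb{R}$. Proper means the immersion is a proper map. *)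

theory Defs
  imports "HOL-Analysis.Analysis"
begin

definition pd :: "bool \<Rightarrow> (real \<times> real \<Rightarrow> real^3) \<Rightarrow> (real \<times> real \<Rightarrow> real^3)" where
  "pd b g = (\<lambda>(u, v). if b then vector_derivative (\<lambda>s. g (s, v)) (at u)
                             else vector_derivative (\<lambda>t. g (u, t)) (at v))"

definition pd_exists :: "bool \<Rightarrow> (real \<times> real \<Rightarrow> real^3) \<Rightarrow> real \<times> real \<Rightarrow> bool" where
  "pd_exists b g z = (case z of (u, v) \<Rightarrow>
      if b then (\<lambda>s. g (s, v)) differentiable (at u)
           else (\<lambda>t. g (u, t)) differentiable (at v))"

fun pds :: "bool list \<Rightarrow> (real \<times> real \<Rightarrow> real^3) \<Rightarrow> (real \<times> real \<Rightarrow> real^3)" where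
  "pds [] g = g"
| "pds (b # bs) g = pd b (pds bs g)"

definition smooth2_on :: "(real \<times> real) set \<Rightarrow> (real \<times> real \<Rightarrow> real^3) \<Rightarrow> bool" where
  "smooth2_on V g \<longleftrightarrow>
     (\<forall>bs. continuous_on V (pds bs g) \<and> (\<forall>b. \<forall>z\<in>V. pd_exists b (pds bs g) z))"

definition gramE :: "(real \<times> real \<Rightarrow> real^3) \<Rightarrow> real \<times> real \<Rightarrow> real" where
  "gramE f z = pd True f z \<bullet> pd True f z"
definition gramF :: "(real \<times> real \<Rightarrow> real^3) \<Rightarrow> real \<times> real \<Rightarrow> real" where
  "gramF f z = pd True f z \<bullet> pd False f z"
definition gramG :: "(real \<times> real \<Rightarrow> real^3) \<Rightarrow> real \<times> real \<Rightarrow> real" where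
  "gramG f z = pd False f z \<bullet> pd False f z"

definition immersion_at :: "(real \<times> real \<Rightarrow> real^3) \<Rightarrow> real \<times> real \<Rightarrow> bool" where
  "immersion_at f z \<longleftrightarrow> gramE f z * gramG f z - (gramF f z)\<^sup>2 \<noteq> 0"

text \<open>Scalar mean curvature w.r.t. unit normal n at parameter z:
  trace of second fundamental form, g^{ij} <f_ij, n>, so that the mean curvature
  vector (trace of the vector-valued 2nd fundamental form) equals  meancurv f n z *R n.\<close>
definition meancurv :: "(real \<times> real \<Rightarrow> real^3) \<Rightarrow> real^3 \<Rightarrow> real \<times> real \<Rightarrow> real" where
  "meancurv f n z =
     (gramG f z * (pd True (pd True f) z \<bullet> n)
      - 2 * gramF f z * (pd True (pd False f) z \<bullet> n)
      + gramE f z * (pd False (pd False f) z \<bullet> n))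
     / (gramE f z * gramG f z - (gramF f z)\<^sup>2)"

abbreviation e3 :: "real^3" where "e3 \<equiv> axis 3 1"

text \<open>A connected oriented immersed surface without boundary: a connected Hausdorff
  space M with a map X : M \<rightarrow> R^3 which near every point is, through a homeomorphic
  chart from an open planar domain, a smooth immersion; N is a continuous unit normal.
  [phi,e3]-minimality: the mean curvature vector equals phi'(mu) eta N.\<close>
definition phi_minimal_surface ::
  "(real \<Rightarrow> real) \<Rightarrow> ('m::t2_space \<Rightarrow> real^3) \<Rightarrow> ('m \<Rightarrow> real^3) \<Rightarrow> bool" where
  "phi_minimal_surface \<phi> X N \<longleftrightarrow>
     connected (UNIV :: 'm set) \<and>
     continuous_on UNIV N \<and> (\<forall>p. norm (N p) = 1) \<and>
     (\<forall>p. \<exists>U V \<psi> \<psi>i. open U \<and> p \<in> U \<and> open V \<and> homeomorphism V U \<psi> \<psi>i \<and>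
         smooth2_on V (X \<circ> \<psi>) \<and>
         (\<forall>z\<in>V. immersion_at (X \<circ> \<psi>) z \<and>
                 N (\<psi> z) \<bullet> pd True (X \<circ> \<psi>) z = 0 \<and>
                 N (\<psi> z) \<bullet> pd False (X \<circ> \<psi>) z = 0 \<and>
                 meancurv (X \<circ> \<psi>) (N (\<psi> z)) z
                   = deriv \<phi> (X (\<psi> z) \<bullet> e3) * (N (\<psi> z) \<bullet> e3)))"

definition proper_map :: "('m::topological_space \<Rightarrow> real^3) \<Rightarrow> bool" where
  "proper_map X \<longleftrightarrow> (\<forall>K. compact K \<longrightarrow> compact (X -` K))"

end

theory Submission
  imports Defs
begin

text \<open>Suppose the surface lies in the wedge {a1 \<bullet> x \<le> b1} \<inter> {a2 \<bullet> x \<le> b2}. There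
  \<Phi>(x) = a1 \<bullet> x + exp (a1 \<bullet> x) + a2 \<bullet> x + exp (a2 \<bullet> x) is bounded above, so by properness
  F = \<Phi> - \<epsilon> ln (1 + |x|^2) attains a maximum on the surface, where its surface Laplacian
  (the tangential trace of Hess F plus \<langle>\<nabla>F, H\<rangle>) is \<le> 0. Since a1, a2 are not parallel, their
  tangential parts a1', a2' satisfy |a1'|^2 + |a2'|^2 \<ge> \<delta> > 0, and the linear terms of \<Phi> keep
  exp (ai \<bullet> x) \<ge> m > 0 at the maximum, so the trace of Hess F is at least m \<delta> - 4\<epsilon>/(1 + |x|^2).
  As \<nabla>F is normal there and a1, a2 are horizontal, the curvature term is
  \<phi>'(\<mu>) \<langle>\<nabla>F, e3\<rangle> = -2\<epsilon> \<mu> \<phi>'(\<mu>) / (1 + |x|^2), which is O(\<epsilon>) by the quadratic growth of \<phi>.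
  For \<epsilon> small compared with m \<delta> the Laplacian is positive: a contradiction.\<close>

section \<open>Tangent frames in 3-space\<close>

definition normal_frame :: "real^3 \<Rightarrow> real^3 \<Rightarrow> real^3 \<Rightarrow> bool" where
  "normal_frame N f1 f2 \<longleftrightarrow> N \<bullet> N = 1 \<and> N \<bullet> f1 = 0 \<and> N \<bullet> f2 = 0 \<and>
     (f1 \<bullet> f1) * (f2 \<bullet> f2) - (f1 \<bullet> f2)\<^sup>2 \<noteq> 0"

definition tangential_sq :: "real^3 \<Rightarrow> real^3 \<Rightarrow> real" where
  "tangential_sq N a = a \<bullet> a - (a \<bullet> N)\<^sup>2"

text \<open>The trace of B on the plane spanned by f1, f2, taken with respect to the inverse of
  the Gram matrix of f1, f2.\<close>
definition tangential_trace :: "real^3 \<Rightarrow> real^3 \<Rightarrow> (real^3 \<Rightarrow> real^3 \<Rightarrow> real) \<Rightarrow> real" where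
  "tangential_trace f1 f2 B =
     ((f2 \<bullet> f2) * B f1 f1 - (f1 \<bullet> f2) * (B f1 f2 + B f2 f1) + (f1 \<bullet> f1) * B f2 f2)
     / ((f1 \<bullet> f1) * (f2 \<bullet> f2) - (f1 \<bullet> f2)\<^sup>2)"

lemma gram_det_pos:
  fixes f1 f2 :: "'a::real_inner"
  assumes "(f1 \<bullet> f1) * (f2 \<bullet> f2) - (f1 \<bullet> f2)\<^sup>2 \<noteq> 0"
  shows "(f1 \<bullet> f1) * (f2 \<bullet> f2) - (f1 \<bullet> f2)\<^sup>2 > 0" and "f2 \<bullet> f2 > 0"
proof -
  show "(f1 \<bullet> f1) * (f2 \<bullet> f2) - (f1 \<bullet> f2)\<^sup>2 > 0"
    using Cauchy_Schwarz_ineq[of f1 f2] assms by linarith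
  show "f2 \<bullet> f2 > 0" using assms by (cases "f2 = 0") auto
qed

lemma orthogonal_to_normal_frame_eq_0:
  fixes w :: "real^3"
  assumes "normal_frame N f1 f2" "w \<bullet> f1 = 0" "w \<bullet> f2 = 0" "w \<bullet> N = 0"
  shows "w = 0"
proof -
  define c where "c = cross3 f1 f2"
  have N: "N \<bullet> N = 1" "N \<bullet> f1 = 0" "N \<bullet> f2 = 0"
    and gram: "(f1 \<bullet> f1) * (f2 \<bullet> f2) - (f1 \<bullet> f2)\<^sup>2 \<noteq> 0"
    using assms(1) unfolding normal_frame_def by auto
  have cc: "c \<bullet> c = (f1 \<bullet> f1) * (f2 \<bullet> f2) - (f1 \<bullet> f2)\<^sup>2"
    unfolding c_def dot_cross by (simp add: power2_eq_square inner_commute)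
  then have "c \<bullet> c \<noteq> 0" using gram by simp
  \<comment> \<open>w and N are orthogonal to f1 and f2, hence multiples of c; as N \<noteq> 0 and w \<bottom> N, w = 0\<close>
  have w: "(c \<bullet> c) *\<^sub>R w = (c \<bullet> w) *\<^sub>R c"
    using Lagrange[of c w c] assms(2,3) unfolding c_def Lagrange by (simp add: inner_commute)
  have n: "(c \<bullet> c) *\<^sub>R N = (c \<bullet> N) *\<^sub>R c"
    using Lagrange[of c N c] N unfolding c_def Lagrange by (simp add: inner_commute)
  have "(c \<bullet> c) * (c \<bullet> c) = ((c \<bullet> c) *\<^sub>R N) \<bullet> ((c \<bullet> c) *\<^sub>R N)" using N by simp
  also have "\<dots> = (c \<bullet> N) * (c \<bullet> N) * (c \<bullet> c)" unfolding n by simp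
  finally have cN: "c \<bullet> N \<noteq> 0" using \<open>c \<bullet> c \<noteq> 0\<close> by auto
  have "0 = ((c \<bullet> c) *\<^sub>R w) \<bullet> ((c \<bullet> c) *\<^sub>R N)" using assms(4) by (simp add: inner_commute)
  also have "\<dots> = (c \<bullet> w) * (c \<bullet> N) * (c \<bullet> c)" unfolding w n by simp
  finally have "c \<bullet> w = 0" using cN \<open>c \<bullet> c \<noteq> 0\<close> by simp
  then show "w = 0" using w \<open>c \<bullet> c \<noteq> 0\<close> by simp
qed

lemma eq_scaleR_normal_if_orthogonal:
  fixes n :: "real^3"
  assumes "normal_frame N f1 f2" "n \<bullet> f1 = 0" "n \<bullet> f2 = 0"
  shows "n = (n \<bullet> N) *\<^sub>R N"
proof -
  have "N \<bullet> N = 1" "N \<bullet> f1 = 0" "N \<bullet> f2 = 0" using assms(1) unfolding normal_frame_def by auto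
  then have "n - (n \<bullet> N) *\<^sub>R N = 0"
    using assms by (intro orthogonal_to_normal_frame_eq_0[of N f1 f2])
      (auto simp: inner_diff_left inner_diff_right inner_commute)
  then show ?thesis by simp
qed

lemma inner_eq_normal_plus_tangential_trace:
  fixes x y :: "real^3"
  assumes "normal_frame N f1 f2"
  shows "x \<bullet> y = (x \<bullet> N) * (y \<bullet> N) + tangential_trace f1 f2 (\<lambda>v w. (x \<bullet> v) * (y \<bullet> w))"
proof -
  define E F G where "E = f1 \<bullet> f1" and "F = f1 \<bullet> f2" and "G = f2 \<bullet> f2"
  define D where "D = E * G - F\<^sup>2"
  have N: "N \<bullet> N = 1" "N \<bullet> f1 = 0" "N \<bullet> f2 = 0" and D: "D \<noteq> 0"
    using assms unfolding normal_frame_def D_def E_def F_def G_def by auto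
  \<comment> \<open>the coordinates of x in the basis N, f1, f2\<close>
  define c1 where "c1 = (G * (x \<bullet> f1) - F * (x \<bullet> f2)) / D"
  define c2 where "c2 = (E * (x \<bullet> f2) - F * (x \<bullet> f1)) / D"
  have "x - (x \<bullet> N) *\<^sub>R N - c1 *\<^sub>R f1 - c2 *\<^sub>R f2 = 0"
  proof (rule orthogonal_to_normal_frame_eq_0[OF assms])
    have "(x - (x \<bullet> N) *\<^sub>R N - c1 *\<^sub>R f1 - c2 *\<^sub>R f2) \<bullet> f1 = x \<bullet> f1 - c1 * E - c2 * F"
      using N unfolding E_def F_def by (simp add: inner_diff_left inner_diff_right inner_commute)
    also have "\<dots> = 0"
      using D unfolding c1_def c2_def D_def by (simp add: field_simps power2_eq_square)
    finally show "(x - (x \<bullet> N) *\<^sub>R N - c1 *\<^sub>R f1 - c2 *\<^sub>R f2) \<bullet> f1 = 0" .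
    have "(x - (x \<bullet> N) *\<^sub>R N - c1 *\<^sub>R f1 - c2 *\<^sub>R f2) \<bullet> f2 = x \<bullet> f2 - c1 * F - c2 * G"
      using N unfolding F_def G_def by (simp add: inner_diff_left inner_diff_right inner_commute)
    also have "\<dots> = 0"
      using D unfolding c1_def c2_def D_def by (simp add: field_simps power2_eq_square)
    finally show "(x - (x \<bullet> N) *\<^sub>R N - c1 *\<^sub>R f1 - c2 *\<^sub>R f2) \<bullet> f2 = 0" .
    show "(x - (x \<bullet> N) *\<^sub>R N - c1 *\<^sub>R f1 - c2 *\<^sub>R f2) \<bullet> N = 0"
      using N by (simp add: inner_diff_left inner_diff_right inner_commute)
  qed
  then have x: "x = (x \<bullet> N) *\<^sub>R N + c1 *\<^sub>R f1 + c2 *\<^sub>R f2" by (simp add: algebra_simps)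
  have "x \<bullet> y = (x \<bullet> N) * (y \<bullet> N) + c1 * (y \<bullet> f1) + c2 * (y \<bullet> f2)"
    by (subst x) (simp add: inner_add_left inner_add_right inner_commute)
  moreover have "c1 * (y \<bullet> f1) + c2 * (y \<bullet> f2) = tangential_trace f1 f2 (\<lambda>v w. (x \<bullet> v) * (y \<bullet> w))"
    unfolding tangential_trace_def E_def[symmetric] F_def[symmetric] G_def[symmetric] D_def[symmetric]
      c1_def c2_def using D by (simp add: field_simps)
  ultimately show ?thesis by simp
qed

lemma tangential_sq_nonneg:
  assumes "N \<bullet> N = 1"
  shows "0 \<le> tangential_sq N a"
  using Cauchy_Schwarz_ineq[of a N] assms unfolding tangential_sq_def by simp

lemma eq_scaleR_normal_if_tangential_sq_eq_0:
  fixes a N :: "real^3"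
  assumes "N \<bullet> N = 1" "tangential_sq N a = 0"
  shows "a = (a \<bullet> N) *\<^sub>R N"
proof -
  have "(a - (a \<bullet> N) *\<^sub>R N) \<bullet> (a - (a \<bullet> N) *\<^sub>R N) = tangential_sq N a"
    using assms(1) unfolding tangential_sq_def
    by (simp add: inner_diff_left inner_diff_right inner_commute power2_eq_square)
  then show ?thesis using assms(2) by simp
qed

lemma tangential_trace_rank_one:
  assumes "normal_frame N f1 f2"
  shows "tangential_trace f1 f2 (\<lambda>v w. (a \<bullet> v) * (a \<bullet> w)) = tangential_sq N a"
  using inner_eq_normal_plus_tangential_trace[OF assms, of a a]
  unfolding tangential_sq_def by (simp add: power2_eq_square)

lemma tangential_trace_inner:
  assumes "normal_frame N f1 f2"
  shows "tangential_trace f1 f2 (\<bullet>) = 2"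
  using assms unfolding normal_frame_def tangential_trace_def
  by (simp add: inner_commute field_simps power2_eq_square)

lemma tangential_sq_sum_bounded_below:
  fixes a1 a2 :: "real^3"
  assumes "a2 \<noteq> 0" and "\<not> (\<exists>c. a1 = c *\<^sub>R a2)"
  obtains \<delta> where "\<delta> > 0" "\<And>N. norm N = 1 \<Longrightarrow> \<delta> \<le> tangential_sq N a1 + tangential_sq N a2"
proof -
  define P where "P N = tangential_sq N a1 + tangential_sq N a2" for N
  have "continuous_on (sphere 0 1) P" unfolding P_def tangential_sq_def by (intro continuous_intros)
  moreover have "sphere (0::real^3) 1 \<noteq> {}" using norm_axis_1 by (metis mem_sphere_0 empty_iff)
  ultimately obtain N0 where N0: "N0 \<in> sphere 0 1" and min: "\<And>N. N \<in> sphere 0 1 \<Longrightarrow> P N0 \<le> P N"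
    using continuous_attains_inf[OF compact_sphere] by blast
  have unit: "N0 \<bullet> N0 = 1" using N0 by (simp add: dot_square_norm)
  have "P N0 \<noteq> 0"
  proof
    assume "P N0 = 0"
    then have "tangential_sq N0 a1 = 0" "tangential_sq N0 a2 = 0"
      using tangential_sq_nonneg[OF unit] unfolding P_def by (smt (verit))+
    then have a1: "a1 = (a1 \<bullet> N0) *\<^sub>R N0" and a2: "a2 = (a2 \<bullet> N0) *\<^sub>R N0"
      using eq_scaleR_normal_if_tangential_sq_eq_0[OF unit] by blast+
    then have "a2 \<bullet> N0 \<noteq> 0" using assms(1) by (metis scale_zero_left)
    then have "a1 = ((a1 \<bullet> N0) / (a2 \<bullet> N0)) *\<^sub>R a2" by (subst a2) (simp flip: a1)
    then show False using assms(2) by blast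
  qed
  then have "P N0 > 0" using tangential_sq_nonneg[OF unit] unfolding P_def by (smt (verit))
  then show ?thesis using that min unfolding P_def by (simp add: dist_norm)
qed

lemma metric_trace_nonpos:
  fixes E F G q11 q12 q22 :: real
  assumes "G > 0" "F\<^sup>2 \<le> E * G"
    and neg: "\<And>\<alpha> \<beta>. \<alpha>\<^sup>2 * q11 + \<alpha> * \<beta> * q12 + \<beta>\<^sup>2 * q22 \<le> 0"
  shows "G * q11 - F * q12 + E * q22 \<le> 0"
proof -
  have "G\<^sup>2 * q11 - G * F * q12 + F\<^sup>2 * q22 \<le> 0" using neg[of G "- F"] by simp
  moreover have "(E * G - F\<^sup>2) * q22 \<le> 0" using neg[of 0 1] assms(2) by (simp add: mult_nonneg_nonpos)
  ultimately have "G * (G * q11 - F * q12 + E * q22) \<le> 0"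
    by (simp add: algebra_simps power2_eq_square)
  then show ?thesis using assms(1) by (simp add: mult_le_0_iff)
qed

lemma tangential_trace_add:
  "tangential_trace f1 f2 (\<lambda>v w. B v w + C v w) = tangential_trace f1 f2 B + tangential_trace f1 f2 C"
  unfolding tangential_trace_def add_divide_distrib[symmetric] by (simp add: algebra_simps)

lemma tangential_trace_diff:
  "tangential_trace f1 f2 (\<lambda>v w. B v w - C v w) = tangential_trace f1 f2 B - tangential_trace f1 f2 C"
  unfolding tangential_trace_def diff_divide_distrib[symmetric] by (simp add: algebra_simps)

lemma tangential_trace_scale:
  "tangential_trace f1 f2 (\<lambda>v w. c * B v w) = c * tangential_trace f1 f2 B"
  unfolding tangential_trace_def by (simp add: algebra_simps)

lemma tangential_trace_second_order_le_0:
  fixes H :: "real^3 \<Rightarrow> real^3" and n N f1 f2 f11 f12 f21 f22 :: "real^3"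
  assumes frame: "normal_frame N f1 f2"
    and first: "n \<bullet> f1 = 0" "n \<bullet> f2 = 0"
    and H: "linear H"
    and sym: "n \<bullet> f21 = n \<bullet> f12"
    and second: "\<And>\<alpha> \<beta>. H (\<alpha> *\<^sub>R f1 + \<beta> *\<^sub>R f2) \<bullet> (\<alpha> *\<^sub>R f1 + \<beta> *\<^sub>R f2)
        + n \<bullet> (\<alpha> *\<^sub>R (\<alpha> *\<^sub>R f11 + \<beta> *\<^sub>R f21) + \<beta> *\<^sub>R (\<alpha> *\<^sub>R f12 + \<beta> *\<^sub>R f22)) \<le> 0"
  shows "tangential_trace f1 f2 (\<lambda>v w. H v \<bullet> w)
      + (n \<bullet> N) * (((f2 \<bullet> f2) * (f11 \<bullet> N) - 2 * (f1 \<bullet> f2) * (f12 \<bullet> N) + (f1 \<bullet> f1) * (f22 \<bullet> N))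
                    / ((f1 \<bullet> f1) * (f2 \<bullet> f2) - (f1 \<bullet> f2)\<^sup>2)) \<le> 0"
proof -
  define E F G where "E = f1 \<bullet> f1" and "F = f1 \<bullet> f2" and "G = f2 \<bullet> f2"
  define D where "D = E * G - F\<^sup>2"
  have D: "D > 0" and G: "G > 0"
    using gram_det_pos frame unfolding normal_frame_def D_def E_def F_def G_def by auto
  define q11 where "q11 = H f1 \<bullet> f1 + n \<bullet> f11"
  define q12 where "q12 = H f1 \<bullet> f2 + H f2 \<bullet> f1 + 2 * (n \<bullet> f12)"
  define q22 where "q22 = H f2 \<bullet> f2 + n \<bullet> f22"
  have "\<alpha>\<^sup>2 * q11 + \<alpha> * \<beta> * q12 + \<beta>\<^sup>2 * q22 \<le> 0" for \<alpha> \<beta>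
  proof -
    have "H (\<alpha> *\<^sub>R f1 + \<beta> *\<^sub>R f2) = \<alpha> *\<^sub>R H f1 + \<beta> *\<^sub>R H f2"
      using H by (simp add: linear_add linear_scale)
    then show ?thesis
      using second[of \<alpha> \<beta>] sym unfolding q11_def q12_def q22_def
      by (simp add: inner_add_left inner_add_right algebra_simps power2_eq_square)
  qed
  then have "G * q11 - F * q12 + E * q22 \<le> 0"
    using metric_trace_nonpos[OF G] Cauchy_Schwarz_ineq[of f1 f2]
    unfolding E_def F_def G_def by blast
  moreover
  have normal: "n \<bullet> y = (n \<bullet> N) * (y \<bullet> N)" for y
    by (subst eq_scaleR_normal_if_orthogonal[OF frame first]) (simp add: inner_commute)
  have "G * q11 - F * q12 + E * q22 = D * (tangential_trace f1 f2 (\<lambda>v w. H v \<bullet> w)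
      + (n \<bullet> N) * ((G * (f11 \<bullet> N) - 2 * F * (f12 \<bullet> N) + E * (f22 \<bullet> N)) / D))"
    using D normal[of f11] normal[of f12] normal[of f22]
    unfolding q11_def q12_def q22_def tangential_trace_def
      E_def[symmetric] F_def[symmetric] G_def[symmetric] D_def[symmetric]
    by (simp add: field_simps)
  ultimately show ?thesis
    using D unfolding E_def F_def G_def D_def by (simp add: mult_le_0_iff)
qed

section \<open>Partial derivatives in a chart\<close>

lemma pds_append: "pds (bs @ cs) g = pds bs (pds cs g)"
  by (induction bs) auto

lemma smooth2_on_pd:
  assumes "smooth2_on V g"
  shows "smooth2_on V (pd b g)"
  using assms pds_append[of _ "[b]" g] unfolding smooth2_on_def by (metis pds.simps)

lemma smooth2_onD:
  assumes "smooth2_on V g"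
  shows "continuous_on V g" "z \<in> V \<Longrightarrow> pd_exists b g z"
  using assms pds.simps(1) unfolding smooth2_on_def by metis+

lemma has_vector_derivative_pd_True:
  "pd_exists True g (u, v) \<Longrightarrow> ((\<lambda>s. g (s, v)) has_vector_derivative pd True g (u, v)) (at u)"
  unfolding pd_exists_def pd_def by (simp add: vector_derivative_works)

lemma has_vector_derivative_pd_False:
  "pd_exists False g (u, v) \<Longrightarrow> ((\<lambda>t. g (u, t)) has_vector_derivative pd False g (u, v)) (at v)"
  unfolding pd_exists_def pd_def by (simp add: vector_derivative_works)

lemma has_real_derivative_inner_right:
  "(g has_vector_derivative D) F \<Longrightarrow> ((\<lambda>x. n \<bullet> g x) has_real_derivative n \<bullet> D) F"
  unfolding has_real_derivative_iff_has_vector_derivative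
  by (rule bounded_linear.has_vector_derivative[OF bounded_linear_inner_right])

lemma smooth2_on_has_derivative:
  fixes g :: "real \<times> real \<Rightarrow> real^3"
  assumes "open V" "z \<in> V" "smooth2_on V g"
  shows "(g has_derivative (\<lambda>h. fst h *\<^sub>R pd True g z + snd h *\<^sub>R pd False g z)) (at z)"
proof -
  obtain u v where z: "z = (u, v)" by (cases z)
  obtain A B where AB: "open A" "open B" "(u, v) \<in> A \<times> B" "A \<times> B \<subseteq> V"
    using open_prod_elim[OF assms(1)] assms(2) z by metis
  obtain r where r: "r > 0" "ball v r \<subseteq> B" using AB(2,3) openE by blast
  let ?X = "A" and ?Y = "ball v r"
  have XY: "?X \<times> ?Y \<subseteq> V" using r AB by auto
  have fx: "((\<lambda>x. g (x, v)) has_derivative (\<lambda>h. h *\<^sub>R pd True g (u, v))) (at u within ?X)"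
    using has_vector_derivative_pd_True smooth2_onD(2)[OF assms(3,2)] z
    unfolding has_vector_derivative_def by (blast intro: has_derivative_at_withinI)
  have fy: "((\<lambda>y. g (x, y)) has_derivative blinfun_scaleR_left (pd False g (x, y))) (at y within ?Y)"
    if "x \<in> ?X" "y \<in> ?Y" for x y
  proof -
    have "(x, y) \<in> V" using XY that by blast
    then show ?thesis
      using has_vector_derivative_pd_False smooth2_onD(2)[OF assms(3)]
      unfolding has_vector_derivative_def by (auto intro: has_derivative_at_withinI)
  qed
  have "continuous_on V (pd False g)" using smooth2_onD(1)[OF smooth2_on_pd[OF assms(3)]] .
  then have "isCont (pd False g) (u, v)"
    using assms(1,2) z continuous_on_eq_continuous_at by blast
  then have "continuous (at (u, v) within ?X \<times> ?Y) (pd False g)"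
    using continuous_at_imp_continuous_within by blast
  then have "continuous (at (u, v) within ?X \<times> ?Y) (\<lambda>(x, y). blinfun_scaleR_left (pd False g (x, y)))"
    using bounded_linear.continuous[OF bounded_linear_blinfun_scaleR_left] by (simp add: case_prod_beta')
  then have "(g has_derivative (\<lambda>(tx, ty). tx *\<^sub>R pd True g (u, v) + ty *\<^sub>R pd False g (u, v)))
      (at (u, v) within ?X \<times> ?Y)"
    using has_derivative_partialsI[OF fx fy] r by (simp add: case_prod_beta')
  then show ?thesis
    using at_within_open[of "(u, v)" "?X \<times> ?Y"] AB r z by (simp add: open_Times case_prod_beta')
qed

lemma has_vector_derivative_along_line:
  fixes g :: "real \<times> real \<Rightarrow> real^3"
  assumes "open V" "smooth2_on V g" "z + t *\<^sub>R d \<in> V"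
  shows "((\<lambda>s. g (z + s *\<^sub>R d)) has_vector_derivative
           fst d *\<^sub>R pd True g (z + t *\<^sub>R d) + snd d *\<^sub>R pd False g (z + t *\<^sub>R d)) (at t)"
proof -
  have "((\<lambda>s. z + s *\<^sub>R d) has_vector_derivative d) (at t)"
    by (auto intro!: derivative_eq_intros)
  from vector_derivative_diff_chain_within[OF this
      has_derivative_at_withinI[OF smooth2_on_has_derivative[OF assms(1,3,2)]]]
  show ?thesis by (simp add: o_def)
qed

lemma mixed_second_difference_mean_value:
  fixes w ws wst :: "real \<times> real \<Rightarrow> real"
  assumes "h > 0"
    and d1: "\<And>s t. s \<in> {u..u+h} \<Longrightarrow> t \<in> {v..v+h} \<Longrightarrow>
               ((\<lambda>s. w (s, t)) has_real_derivative ws (s, t)) (at s)"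
    and d12: "\<And>s t. s \<in> {u..u+h} \<Longrightarrow> t \<in> {v..v+h} \<Longrightarrow>
               ((\<lambda>t. ws (s, t)) has_real_derivative wst (s, t)) (at t)"
  obtains \<xi> \<eta> where "\<xi> \<in> {u..u+h}" "\<eta> \<in> {v..v+h}"
    "w (u+h, v+h) - w (u+h, v) - w (u, v+h) + w (u, v) = h\<^sup>2 * wst (\<xi>, \<eta>)"
proof -
  have "\<exists>\<xi>. u < \<xi> \<and> \<xi> < u + h \<and> (w (u+h, v+h) - w (u+h, v)) - (w (u, v+h) - w (u, v))
      = ((u + h) - u) * (ws (\<xi>, v+h) - ws (\<xi>, v))"
    by (rule MVT2) (use assms(1) in \<open>auto intro!: DERIV_diff d1\<close>)
  then obtain \<xi> where \<xi>: "u < \<xi>" "\<xi> < u + h"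
    "(w (u+h, v+h) - w (u+h, v)) - (w (u, v+h) - w (u, v)) = h * (ws (\<xi>, v+h) - ws (\<xi>, v))"
    by auto
  have "\<exists>\<eta>. v < \<eta> \<and> \<eta> < v + h \<and> ws (\<xi>, v+h) - ws (\<xi>, v) = ((v + h) - v) * wst (\<xi>, \<eta>)"
    by (rule MVT2) (use assms(1) \<xi>(1,2) in \<open>auto intro!: d12\<close>)
  then obtain \<eta> where \<eta>: "v < \<eta>" "\<eta> < v + h" "ws (\<xi>, v+h) - ws (\<xi>, v) = h * wst (\<xi>, \<eta>)"
    by auto
  show ?thesis
    by (rule that[of \<xi> \<eta>]) (use \<xi> \<eta> in \<open>auto simp: power2_eq_square algebra_simps\<close>)
qed

lemma eq_if_isCont_and_eq_nearby:
  fixes a b :: "'a::metric_space \<Rightarrow> real"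
  assumes "isCont a z" "isCont b z"
    and near: "\<And>d. d > 0 \<Longrightarrow> \<exists>x y. dist x z < d \<and> dist y z < d \<and> a x = b y"
  shows "a z = b z"
proof (rule ccontr)
  assume "a z \<noteq> b z"
  define e where "e = \<bar>a z - b z\<bar> / 2"
  have "e > 0" using \<open>a z \<noteq> b z\<close> unfolding e_def by simp
  obtain d1 where d1: "d1 > 0" "\<And>x. dist x z < d1 \<Longrightarrow> \<bar>a x - a z\<bar> < e"
    using assms(1) \<open>e > 0\<close> unfolding continuous_at_eps_delta dist_real_def by blast
  obtain d2 where d2: "d2 > 0" "\<And>y. dist y z < d2 \<Longrightarrow> \<bar>b y - b z\<bar> < e"
    using assms(2) \<open>e > 0\<close> unfolding continuous_at_eps_delta dist_real_def by blast
  obtain x y where xy: "dist x z < min d1 d2" "dist y z < min d1 d2" "a x = b y"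
    using near[of "min d1 d2"] d1(1) d2(1) by auto
  have "\<bar>a x - a z\<bar> < e" "\<bar>b y - b z\<bar> < e" using d1(2) d2(2) xy(1,2) by simp_all
  with xy(3) e_def show False by (auto simp: abs_if split: if_split_asm)
qed

lemma inner_mixed_pd_eq_in_square:
  fixes f :: "real \<times> real \<Rightarrow> real^3"
  assumes f: "smooth2_on V f" and h: "h > 0" and square: "{u..u+h} \<times> {v..v+h} \<subseteq> V"
  obtains \<xi> \<eta> \<xi>' \<eta>' where "\<xi> \<in> {u..u+h}" "\<eta> \<in> {v..v+h}" "\<xi>' \<in> {u..u+h}" "\<eta>' \<in> {v..v+h}"
    "n \<bullet> pd False (pd True f) (\<xi>, \<eta>) = n \<bullet> pd True (pd False f) (\<xi>', \<eta>')"
proof -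
  have ex: "pd_exists b g (s, t)"
    if "g \<in> {f, pd True f, pd False f}" "s \<in> {u..u+h}" "t \<in> {v..v+h}" for b g s t
  proof -
    have "smooth2_on V g" using that(1) smooth2_on_pd[OF f] f by auto
    then show ?thesis using smooth2_onD(2) square that(2,3) by blast
  qed
  have dT: "((\<lambda>s. n \<bullet> g (s, t)) has_real_derivative n \<bullet> pd True g (s, t)) (at s)"
    and dF: "((\<lambda>t. n \<bullet> g (s, t)) has_real_derivative n \<bullet> pd False g (s, t)) (at t)"
    if "g \<in> {f, pd True f, pd False f}" "s \<in> {u..u+h}" "t \<in> {v..v+h}" for g s t
    using ex[OF that] by (auto intro!: has_real_derivative_inner_right
        has_vector_derivative_pd_True has_vector_derivative_pd_False)
  \<comment> \<open>the second difference of n \<bullet> f over the square, expanded in both orders\<close>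
  define w where "w y = n \<bullet> f y" for y
  obtain \<xi> \<eta> where \<xi>\<eta>: "\<xi> \<in> {u..u+h}" "\<eta> \<in> {v..v+h}"
    "w (u+h, v+h) - w (u+h, v) - w (u, v+h) + w (u, v) = h\<^sup>2 * (n \<bullet> pd False (pd True f) (\<xi>, \<eta>))"
    using mixed_second_difference_mean_value[OF h, where u = u and v = v and w = w
        and ws = "\<lambda>y. n \<bullet> pd True f y" and wst = "\<lambda>y. n \<bullet> pd False (pd True f) y"]
      dT[of f] dF[of "pd True f"] unfolding w_def by auto
  obtain \<eta>' \<xi>' where \<xi>\<eta>': "\<eta>' \<in> {v..v+h}" "\<xi>' \<in> {u..u+h}"
    "w (u+h, v+h) - w (u, v+h) - w (u+h, v) + w (u, v) = h\<^sup>2 * (n \<bullet> pd True (pd False f) (\<xi>', \<eta>'))"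
    using mixed_second_difference_mean_value[OF h, where u = v and v = u and w = "\<lambda>(t, s). w (s, t)"
        and ws = "\<lambda>(t, s). n \<bullet> pd False f (s, t)" and wst = "\<lambda>(t, s). n \<bullet> pd True (pd False f) (s, t)"]
      dF[of f] dT[of "pd False f"] unfolding w_def by auto
  have "n \<bullet> pd False (pd True f) (\<xi>, \<eta>) = n \<bullet> pd True (pd False f) (\<xi>', \<eta>')"
    using \<xi>\<eta>(3) \<xi>\<eta>'(3) h by (simp add: algebra_simps)
  with \<xi>\<eta>(1,2) \<xi>\<eta>'(2,1) show ?thesis by (rule that)
qed

lemma smooth2_on_mixed_pd_commute:
  fixes f :: "real \<times> real \<Rightarrow> real^3"
  assumes V: "open V" "z \<in> V" and f: "smooth2_on V f"
  shows "pd False (pd True f) z = pd True (pd False f) z"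
proof -
  obtain u v where z: "z = (u, v)" by (cases z)
  obtain r where r: "r > 0" "ball z r \<subseteq> V" using V openE by blast
  have "n \<bullet> pd False (pd True f) z = n \<bullet> pd True (pd False f) z" for n
  proof (rule eq_if_isCont_and_eq_nearby[where a = "\<lambda>y. n \<bullet> pd False (pd True f) y"
        and b = "\<lambda>y. n \<bullet> pd True (pd False f) y"])
    have "isCont (pd False (pd True f)) z" "isCont (pd True (pd False f)) z"
      using smooth2_onD(1)[OF smooth2_on_pd[OF smooth2_on_pd[OF f]]] V continuous_on_eq_continuous_at
      by blast+
    then show "isCont (\<lambda>y. n \<bullet> pd False (pd True f) y) z" "isCont (\<lambda>y. n \<bullet> pd True (pd False f) y) z"
      by (simp_all add: continuous_inner)
  next
    fix d :: real assume "d > 0"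
    define h where "h = min d r / 3"
    have h: "h > 0" using \<open>d > 0\<close> r unfolding h_def by simp
    have near: "dist (s, t) z < min d r" if "s \<in> {u..u+h}" "t \<in> {v..v+h}" for s t
    proof -
      have "dist (s, t) z \<le> \<bar>s - u\<bar> + \<bar>t - v\<bar>"
        using sqrt_sum_squares_le_sum_abs[of "s - u" "t - v"] z by (simp add: dist_Pair_Pair dist_real_def)
      also have "\<dots> < min d r" using that h unfolding h_def by auto
      finally show ?thesis .
    qed
    then have "(s, t) \<in> V" if "s \<in> {u..u+h}" "t \<in> {v..v+h}" for s t
      using that r by (auto simp: dist_commute)
    then have "{u..u+h} \<times> {v..v+h} \<subseteq> V" by blast
    then obtain \<xi> \<eta> \<xi>' \<eta>' where box: "\<xi> \<in> {u..u+h}" "\<eta> \<in> {v..v+h}" "\<xi>' \<in> {u..u+h}" "\<eta>' \<in> {v..v+h}"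
      and eq: "n \<bullet> pd False (pd True f) (\<xi>, \<eta>) = n \<bullet> pd True (pd False f) (\<xi>', \<eta>')"
      using inner_mixed_pd_eq_in_square[OF f h] by blast
    show "\<exists>x y. dist x z < d \<and> dist y z < d \<and>
        n \<bullet> pd False (pd True f) x = n \<bullet> pd True (pd False f) y"
      using near[OF box(1,2)] near[OF box(3,4)] eq by force
  qed
  from this[of "pd False (pd True f) z - pd True (pd False f) z"]
  have "(pd False (pd True f) z - pd True (pd False f) z) \<bullet> (pd False (pd True f) z - pd True (pd False f) z) = 0"
    by (simp add: inner_diff_left inner_diff_right)
  then show ?thesis by simp
qed

section \<open>The maximum principle on a surface\<close>

lemma local_max_first_second_order:
  fixes g g' :: "real \<Rightarrow> real"
  assumes "r > 0" and max: "\<And>t. \<bar>t\<bar> < r \<Longrightarrow> g t \<le> g 0"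
    and g: "\<And>t. \<bar>t\<bar> < r \<Longrightarrow> (g has_real_derivative g' t) (at t)"
    and g': "(g' has_real_derivative c) (at 0)"
  shows "g' 0 = 0" and "c \<le> 0"
proof -
  show g'0: "g' 0 = 0"
    by (rule DERIV_local_max[OF g[of 0] \<open>r > 0\<close>]) (use \<open>r > 0\<close> max in auto)
  show "c \<le> 0"
  proof (rule ccontr)
    assume "\<not> c \<le> 0"
    then obtain d where "d > 0" and inc: "\<And>h. 0 < h \<Longrightarrow> h < d \<Longrightarrow> g' 0 < g' h"
      using DERIV_pos_inc_right[OF g'] by force
    define t where "t = min d r / 2"
    have t: "0 < t" "t < d" "t < r" using \<open>d > 0\<close> \<open>r > 0\<close> unfolding t_def by auto
    have "\<exists>\<xi>. 0 < \<xi> \<and> \<xi> < t \<and> g t - g 0 = (t - 0) * g' \<xi>"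
      by (rule MVT2) (use t g in auto)
    then obtain \<xi> where "0 < \<xi>" "\<xi> < t" "g t - g 0 = t * g' \<xi>" by auto
    moreover have "g' \<xi> > 0" using inc[of \<xi>] \<open>0 < \<xi>\<close> \<open>\<xi> < t\<close> t g'0 by simp
    ultimately have "g t > g 0" using t by (simp add: algebra_simps)
    then show False using max[of t] t by simp
  qed
qed

lemma local_max_second_order_in_chart:
  fixes f :: "real \<times> real \<Rightarrow> real^3" and Ft :: "real^3 \<Rightarrow> real"
    and gF :: "real^3 \<Rightarrow> real^3" and HF :: "real^3 \<Rightarrow> real^3 \<Rightarrow> real^3" and \<alpha> \<beta> :: real
  assumes V: "open V" "z \<in> V" and f: "smooth2_on V f"
    and dF: "\<And>x. (Ft has_derivative (\<lambda>h. gF x \<bullet> h)) (at x)"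
    and dG: "\<And>x. (gF has_derivative HF x) (at x)"
    and max: "\<And>y. y \<in> V \<Longrightarrow> Ft (f y) \<le> Ft (f z)"
  defines "v \<equiv> \<alpha> *\<^sub>R pd True f z + \<beta> *\<^sub>R pd False f z"
    and "w \<equiv> \<alpha> *\<^sub>R (\<alpha> *\<^sub>R pd True (pd True f) z + \<beta> *\<^sub>R pd False (pd True f) z)
           + \<beta> *\<^sub>R (\<alpha> *\<^sub>R pd True (pd False f) z + \<beta> *\<^sub>R pd False (pd False f) z)"
  shows "gF (f z) \<bullet> v = 0" and "HF (f z) v \<bullet> v + gF (f z) \<bullet> w \<le> 0"
proof -
  define d where "d = (\<alpha>, \<beta>)"
  have d: "fst d = \<alpha>" "snd d = \<beta>" unfolding d_def by simp_all
  define c where "c t = f (z + t *\<^sub>R d)" for t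
  define \<gamma> where "\<gamma> t = \<alpha> *\<^sub>R pd True f (z + t *\<^sub>R d) + \<beta> *\<^sub>R pd False f (z + t *\<^sub>R d)" for t
  have "open ((\<lambda>t. z + t *\<^sub>R d) -` V)"
    using V(1) by (intro continuous_open_vimage continuous_intros)
  then obtain r where "r > 0" "ball 0 r \<subseteq> (\<lambda>t. z + t *\<^sub>R d) -` V"
    using V(2) openE[of _ 0] by force
  then have line: "z + t *\<^sub>R d \<in> V" if "\<bar>t\<bar> < r" for t
    using that by (auto simp: dist_real_def)
  have c: "(c has_vector_derivative \<gamma> t) (at t)" if "\<bar>t\<bar> < r" for t
    using has_vector_derivative_along_line[OF V(1) f line[OF that]] d
    unfolding c_def \<gamma>_def by simp
  have "((\<lambda>t. pd b f (z + t *\<^sub>R d)) has_vector_derivative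
      \<alpha> *\<^sub>R pd True (pd b f) z + \<beta> *\<^sub>R pd False (pd b f) z) (at 0)" for b
    using has_vector_derivative_along_line[OF V(1) smooth2_on_pd[OF f], of z 0 d] V(2) d by simp
  then have "(\<gamma> has_vector_derivative w) (at 0)"
    unfolding \<gamma>_def w_def by (auto intro!: derivative_eq_intros)
  moreover have "((\<lambda>t. gF (c t)) has_vector_derivative HF (f z) v) (at 0)"
    using vector_derivative_diff_chain_within[OF c[of 0] has_derivative_at_withinI[OF dG]] \<open>r > 0\<close>
    unfolding c_def \<gamma>_def v_def by (simp add: o_def)
  ultimately have g': "((\<lambda>t. gF (c t) \<bullet> \<gamma> t) has_real_derivative HF (f z) v \<bullet> v + gF (f z) \<bullet> w) (at 0)"
    using bounded_bilinear.has_vector_derivative[OF bounded_bilinear_inner]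
    unfolding has_real_derivative_iff_has_vector_derivative c_def \<gamma>_def v_def
    by (fastforce simp: inner_commute)
  have g: "((\<lambda>t. Ft (c t)) has_real_derivative gF (c t) \<bullet> \<gamma> t) (at t)" if "\<bar>t\<bar> < r" for t
    using vector_derivative_diff_chain_within[OF c[OF that] has_derivative_at_withinI[OF dF]]
    unfolding has_real_derivative_iff_has_vector_derivative by (simp add: o_def)
  have "Ft (c t) \<le> Ft (c 0)" if "\<bar>t\<bar> < r" for t
    using max[OF line[OF that]] unfolding c_def by simp
  from local_max_first_second_order[OF \<open>r > 0\<close> this g g']
  show "gF (f z) \<bullet> v = 0" and "HF (f z) v \<bullet> v + gF (f z) \<bullet> w \<le> 0"
    unfolding c_def \<gamma>_def v_def by simp_all
qed

lemma phi_minimal_surface_continuous: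
  assumes "phi_minimal_surface \<phi> X N"
  shows "continuous_on UNIV X"
proof (rule continuous_at_imp_continuous_on, intro ballI)
  fix p
  obtain U V \<psi> \<psi>i where "open U" "p \<in> U" "homeomorphism V U \<psi> \<psi>i" "smooth2_on V (X \<circ> \<psi>)"
    using assms unfolding phi_minimal_surface_def by blast
  then have hm: "\<psi>i ` U = V" "continuous_on U \<psi>i" "\<forall>y\<in>U. \<psi> (\<psi>i y) = y"
    and cont: "continuous_on V (X \<circ> \<psi>)"
    using smooth2_onD(1) unfolding homeomorphism_def by blast+
  have "continuous_on U ((X \<circ> \<psi>) \<circ> \<psi>i)"
    using continuous_on_compose[OF hm(2), of "X \<circ> \<psi>"] hm(1) cont by simp
  then have "continuous_on U X" by (rule continuous_on_eq) (use hm in auto)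
  then show "isCont X p" using \<open>open U\<close> \<open>p \<in> U\<close> continuous_on_eq_continuous_at by blast
qed

lemma phi_minimal_surface_max_principle:
  fixes X :: "'m::t2_space \<Rightarrow> real^3" and Ft :: "real^3 \<Rightarrow> real"
    and gF :: "real^3 \<Rightarrow> real^3" and HF :: "real^3 \<Rightarrow> real^3 \<Rightarrow> real^3"
  assumes surf: "phi_minimal_surface \<phi> X N"
    and dF: "\<And>x. (Ft has_derivative (\<lambda>h. gF x \<bullet> h)) (at x)"
    and dG: "\<And>x. (gF has_derivative HF x) (at x)"
    and max: "\<And>q. Ft (X q) \<le> Ft (X p)"
  obtains f1 f2 where "normal_frame (N p) f1 f2" "gF (X p) \<bullet> f1 = 0" "gF (X p) \<bullet> f2 = 0"
    "tangential_trace f1 f2 (\<lambda>v w. HF (X p) v \<bullet> w)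
       + (gF (X p) \<bullet> N p) * (deriv \<phi> (X p \<bullet> e3) * (N p \<bullet> e3)) \<le> 0"
proof -
  obtain U V \<psi> \<psi>i where chart: "open U" "p \<in> U" "open V" "homeomorphism V U \<psi> \<psi>i"
      "smooth2_on V (X \<circ> \<psi>)"
    and geom: "\<And>z. z \<in> V \<Longrightarrow> immersion_at (X \<circ> \<psi>) z \<and>
      N (\<psi> z) \<bullet> pd True (X \<circ> \<psi>) z = 0 \<and> N (\<psi> z) \<bullet> pd False (X \<circ> \<psi>) z = 0 \<and>
      meancurv (X \<circ> \<psi>) (N (\<psi> z)) z = deriv \<phi> (X (\<psi> z) \<bullet> e3) * (N (\<psi> z) \<bullet> e3)"
    using surf unfolding phi_minimal_surface_def by metis
  define f where "f = X \<circ> \<psi>"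
  define z where "z = \<psi>i p"
  have "z \<in> V" "\<psi> z = p" using chart(2,4) unfolding z_def homeomorphism_def by auto
  then have fz: "f z = X p" unfolding f_def by simp
  have "N p \<bullet> N p = 1" using surf unfolding phi_minimal_surface_def by (simp add: dot_square_norm)
  then have frame: "normal_frame (N p) (pd True f z) (pd False f z)"
    and H: "meancurv f (N p) z = deriv \<phi> (X p \<bullet> e3) * (N p \<bullet> e3)"
    using geom[OF \<open>z \<in> V\<close>] \<open>\<psi> z = p\<close>
    unfolding normal_frame_def immersion_at_def gramE_def gramF_def gramG_def f_def by auto
  have "Ft (f y) \<le> Ft (f z)" if "y \<in> V" for y using max unfolding fz by (simp add: f_def)
  note second_order = local_max_second_order_in_chart[OF chart(3) \<open>z \<in> V\<close> chart(5)[folded f_def] dF dG this]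
  have first: "gF (X p) \<bullet> pd True f z = 0" "gF (X p) \<bullet> pd False f z = 0"
    using second_order(1)[of 1 0] second_order(1)[of 0 1] unfolding fz by simp_all
  have sym: "gF (X p) \<bullet> pd False (pd True f) z = gF (X p) \<bullet> pd True (pd False f) z"
    using smooth2_on_mixed_pd_commute[OF chart(3) \<open>z \<in> V\<close> chart(5)[folded f_def]] by simp
  from tangential_trace_second_order_le_0[OF frame first has_derivative_linear[OF dG] sym
      second_order(2)[unfolded fz]]
  have "tangential_trace (pd True f z) (pd False f z) (\<lambda>v w. HF (X p) v \<bullet> w)
      + (gF (X p) \<bullet> N p) * meancurv f (N p) z \<le> 0"
    unfolding meancurv_def gramE_def gramF_def gramG_def .
  with frame first show ?thesis unfolding H by (rule that)
qed

lemma one_plus_inner_self_pos: "0 < 1 + x \<bullet> (x::'a::real_inner)"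
  by (simp add: add_pos_nonneg)

lemma proper_map_penalized_attains_max:
  fixes X :: "'m::topological_space \<Rightarrow> real^3" and \<Phi> :: "real^3 \<Rightarrow> real"
  assumes contX: "continuous_on UNIV X" and proper: "proper_map X"
    and cont\<Phi>: "continuous_on UNIV \<Phi>" and bounded: "\<And>q. \<Phi> (X q) \<le> B" and "\<epsilon> > 0"
  obtains p where "\<And>q. \<Phi> (X q) - \<epsilon> * ln (1 + X q \<bullet> X q) \<le> \<Phi> (X p) - \<epsilon> * ln (1 + X p \<bullet> X p)"
proof -
  define F where "F x = \<Phi> x - \<epsilon> * ln (1 + x \<bullet> x)" for x
  obtain p0 :: 'm where True by simp
  define S where "S = {q. F (X p0) \<le> F (X q)}"
  have contF: "continuous_on UNIV (\<lambda>q. F (X q))"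
  proof -
    have "1 + X q \<bullet> X q \<noteq> 0" for q using one_plus_inner_self_pos[of "X q"] by simp
    then show ?thesis unfolding F_def
      by (intro continuous_intros continuous_on_compose2[OF cont\<Phi> contX] contX) auto
  qed
  define R where "R = sqrt (exp ((B - F (X p0)) / \<epsilon>))"
  have bounded_S: "S \<subseteq> X -` cball 0 R"
  proof
    fix q assume "q \<in> S"
    then have "\<epsilon> * ln (1 + X q \<bullet> X q) \<le> B - F (X p0)"
      using bounded[of q] unfolding S_def F_def by simp
    then have "ln (1 + X q \<bullet> X q) \<le> (B - F (X p0)) / \<epsilon>"
      using \<open>\<epsilon> > 0\<close> by (simp add: field_simps)
    then have "1 + X q \<bullet> X q \<le> exp ((B - F (X p0)) / \<epsilon>)"
      using one_plus_inner_self_pos[of "X q"] by (metis exp_le_cancel_iff exp_ln)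
    then have "(norm (X q))\<^sup>2 \<le> exp ((B - F (X p0)) / \<epsilon>)"
      by (simp add: power2_norm_eq_inner)
    then show "q \<in> X -` cball 0 R" unfolding R_def by (simp add: real_le_rsqrt)
  qed
  have "closed S" unfolding S_def by (rule closed_Collect_le) (use contF in auto)
  moreover have "compact (X -` cball 0 R)" using proper unfolding proper_map_def by simp
  ultimately have "compact (X -` cball 0 R \<inter> S)" by blast
  then have "compact S" using bounded_S by (simp add: Int_absorb1)
  moreover have "S \<noteq> {}" unfolding S_def by blast
  ultimately obtain p where "p \<in> S" and max: "\<And>q. q \<in> S \<Longrightarrow> F (X q) \<le> F (X p)"
    using continuous_attains_sup[OF _ _ continuous_on_subset[OF contF subset_UNIV]] by metis
  have "F (X q) \<le> F (X p)" for q
  proof (cases "q \<in> S")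
    case False
    then show ?thesis using \<open>p \<in> S\<close> unfolding S_def by simp
  qed (rule max)
  then show ?thesis using that unfolding F_def by blast
qed

section \<open>The test function\<close>

definition test_fun :: "real^3 \<Rightarrow> real^3 \<Rightarrow> real \<Rightarrow> real^3 \<Rightarrow> real" where
  "test_fun a1 a2 \<epsilon> x = (a1 \<bullet> x) + exp (a1 \<bullet> x) + (a2 \<bullet> x) + exp (a2 \<bullet> x) - \<epsilon> * ln (1 + x \<bullet> x)"

definition test_grad :: "real^3 \<Rightarrow> real^3 \<Rightarrow> real \<Rightarrow> real^3 \<Rightarrow> real^3" where
  "test_grad a1 a2 \<epsilon> x =
     (1 + exp (a1 \<bullet> x)) *\<^sub>R a1 + (1 + exp (a2 \<bullet> x)) *\<^sub>R a2 - (2 * \<epsilon> / (1 + x \<bullet> x)) *\<^sub>R x"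

definition test_hess :: "real^3 \<Rightarrow> real^3 \<Rightarrow> real \<Rightarrow> real^3 \<Rightarrow> real^3 \<Rightarrow> real^3" where
  "test_hess a1 a2 \<epsilon> x h =
     (exp (a1 \<bullet> x) * (a1 \<bullet> h)) *\<^sub>R a1 + (exp (a2 \<bullet> x) * (a2 \<bullet> h)) *\<^sub>R a2
     - (2 * \<epsilon> / (1 + x \<bullet> x)) *\<^sub>R h + (4 * \<epsilon> / (1 + x \<bullet> x)\<^sup>2 * (x \<bullet> h)) *\<^sub>R x"

lemma has_derivative_test_fun:
  "(test_fun a1 a2 \<epsilon> has_derivative (\<lambda>h. test_grad a1 a2 \<epsilon> x \<bullet> h)) (at x)"
proof -
  have pos: "0 < 1 + x \<bullet> x" "1 + x \<bullet> x \<noteq> 0" using one_plus_inner_self_pos[of x] by auto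
  show ?thesis
    unfolding test_fun_def[abs_def]
    apply (rule has_derivative_eq_rhs)
     apply (rule derivative_eq_intros | simp add: pos)+
    using pos unfolding test_grad_def
    by (intro ext) (simp add: inner_add_right inner_diff_right inner_commute field_simps)
qed

lemma has_derivative_test_grad: "(test_grad a1 a2 \<epsilon> has_derivative test_hess a1 a2 \<epsilon> x) (at x)"
proof -
  have pos: "0 < 1 + x \<bullet> x" "1 + x \<bullet> x \<noteq> 0" using one_plus_inner_self_pos[of x] by auto
  show ?thesis
    unfolding test_grad_def[abs_def]
    apply (rule has_derivative_eq_rhs)
     apply (rule derivative_eq_intros | simp add: pos)+
    using pos unfolding test_hess_def
    by (intro ext) (simp add: inner_commute field_simps power2_eq_square algebra_simps)
qed

lemma tangential_trace_test_hess:
  assumes "normal_frame N f1 f2"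
  shows "tangential_trace f1 f2 (\<lambda>v w. test_hess a1 a2 \<epsilon> x v \<bullet> w)
    = exp (a1 \<bullet> x) * tangential_sq N a1 + exp (a2 \<bullet> x) * tangential_sq N a2
      - 2 * (2 * \<epsilon> / (1 + x \<bullet> x)) + 4 * \<epsilon> / (1 + x \<bullet> x)\<^sup>2 * tangential_sq N x"
proof -
  define \<kappa> \<mu> where "\<kappa> = 2 * \<epsilon> / (1 + x \<bullet> x)" and "\<mu> = 4 * \<epsilon> / (1 + x \<bullet> x)\<^sup>2"
  have "(\<lambda>v w. test_hess a1 a2 \<epsilon> x v \<bullet> w) = (\<lambda>v w.
      exp (a1 \<bullet> x) * ((a1 \<bullet> v) * (a1 \<bullet> w)) + exp (a2 \<bullet> x) * ((a2 \<bullet> v) * (a2 \<bullet> w))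
      - \<kappa> * (v \<bullet> w) + \<mu> * ((x \<bullet> v) * (x \<bullet> w)))"
    unfolding test_hess_def \<kappa>_def[symmetric] \<mu>_def[symmetric]
    by (intro ext) (simp add: inner_add_left inner_diff_left inner_add_right inner_diff_right inner_commute)
  then show ?thesis
    using tangential_trace_rank_one[OF assms] tangential_trace_inner[OF assms]
    unfolding \<kappa>_def[symmetric] \<mu>_def[symmetric]
    by (simp add: tangential_trace_add tangential_trace_diff tangential_trace_scale)
qed

lemma penalty_terms_small:
  fixes \<epsilon> C K s t \<phi>' :: real
  assumes "\<epsilon> > 0" "C > 0" "K > 0" "\<bar>\<phi>'\<bar> \<le> C * (1 + \<bar>t\<bar>)" "t\<^sup>2 \<le> s"
    and "\<epsilon> \<le> K / (8 * (1 + C))"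
  shows "2 * (2 * \<epsilon> / (1 + s)) + \<bar>2 * \<epsilon> / (1 + s) * t * \<phi>'\<bar> < K"
proof -
  define \<kappa> where "\<kappa> = 2 * \<epsilon> / (1 + s)"
  have "0 \<le> s" using assms(5) by (smt (verit) zero_le_power2)
  then have \<kappa>: "0 \<le> \<kappa>" "\<kappa> * (1 + s) = 2 * \<epsilon>" "\<kappa> \<le> 2 * \<epsilon>"
    using assms(1) unfolding \<kappa>_def by (auto simp: field_simps)
  have "(\<bar>t\<bar> - 1)\<^sup>2 = t\<^sup>2 - 2 * \<bar>t\<bar> + 1"
    by (simp add: power2_eq_square algebra_simps abs_mult_self_eq)
  then have "\<bar>t\<bar> \<le> 1 + t\<^sup>2" using zero_le_power2[of "\<bar>t\<bar> - 1"] by linarith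
  then have "\<bar>t\<bar> + t\<^sup>2 \<le> 2 + 2 * s" using assms(5) by linarith
  have "\<bar>t\<bar> * \<bar>\<phi>'\<bar> \<le> \<bar>t\<bar> * (C * (1 + \<bar>t\<bar>))" using assms(4) by (simp add: mult_left_mono)
  also have "\<dots> = C * (\<bar>t\<bar> + t\<^sup>2)" by (simp add: algebra_simps power2_eq_square abs_mult_self_eq)
  finally have t\<phi>: "\<bar>t\<bar> * \<bar>\<phi>'\<bar> \<le> C * (\<bar>t\<bar> + t\<^sup>2)" .
  have "\<bar>\<kappa> * t * \<phi>'\<bar> = \<kappa> * (\<bar>t\<bar> * \<bar>\<phi>'\<bar>)" using \<kappa>(1) by (simp add: abs_mult)
  also have "\<dots> \<le> \<kappa> * (C * (\<bar>t\<bar> + t\<^sup>2))" using t\<phi> \<kappa>(1) by (rule mult_left_mono)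
  also have "\<dots> \<le> \<kappa> * (C * (2 + 2 * s))"
    using \<open>\<bar>t\<bar> + t\<^sup>2 \<le> 2 + 2 * s\<close> \<kappa>(1) assms(2) by (intro mult_left_mono) auto
  also have "\<dots> = 2 * C * (\<kappa> * (1 + s))" by (simp add: algebra_simps)
  also have "\<dots> = 4 * (C * \<epsilon>)" using \<kappa>(2) by simp
  finally have "\<bar>\<kappa> * t * \<phi>'\<bar> \<le> 4 * (C * \<epsilon>)" .
  moreover have "\<epsilon> * (8 * (1 + C)) \<le> K" using assms(2,6) by (simp add: pos_le_divide_eq)
  then have "8 * \<epsilon> + 8 * (C * \<epsilon>) \<le> K" by (simp add: algebra_simps)
  ultimately show ?thesis using \<kappa>(3) assms(1,3) unfolding \<kappa>_def[symmetric] by linarith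
qed

lemma test_fun_surface_laplacian_pos:
  fixes a1 a2 x N f1 f2 :: "real^3"
  assumes frame: "normal_frame N f1 f2"
    and first: "test_grad a1 a2 \<epsilon> x \<bullet> f1 = 0" "test_grad a1 a2 \<epsilon> x \<bullet> f2 = 0"
    and horizontal: "a1 \<bullet> e3 = 0" "a2 \<bullet> e3 = 0"
    and pos: "\<epsilon> > 0" "C > 0" "m > 0" "\<delta> > 0"
    and exp: "m \<le> exp (a1 \<bullet> x)" "m \<le> exp (a2 \<bullet> x)"
    and \<delta>: "\<delta> \<le> tangential_sq N a1 + tangential_sq N a2"
    and growth: "\<bar>\<phi>'\<bar> \<le> C * (1 + \<bar>x \<bullet> e3\<bar>)"
    and small: "\<epsilon> \<le> m * \<delta> / (8 * (1 + C))"
  shows "0 < tangential_trace f1 f2 (\<lambda>v w. test_hess a1 a2 \<epsilon> x v \<bullet> w)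
           + (test_grad a1 a2 \<epsilon> x \<bullet> N) * (\<phi>' * (N \<bullet> e3))"
proof -
  define n where "n = test_grad a1 a2 \<epsilon> x"
  define \<kappa> where "\<kappa> = 2 * \<epsilon> / (1 + x \<bullet> x)"
  have unit: "N \<bullet> N = 1" using frame unfolding normal_frame_def by simp
  have "m * \<delta> \<le> m * tangential_sq N a1 + m * tangential_sq N a2"
    using \<delta> pos(3) by (simp add: distrib_left[symmetric])
  also have "\<dots> \<le> exp (a1 \<bullet> x) * tangential_sq N a1 + exp (a2 \<bullet> x) * tangential_sq N a2"
    using exp tangential_sq_nonneg[OF unit] by (intro add_mono mult_right_mono)
  finally have "m * \<delta> \<le> exp (a1 \<bullet> x) * tangential_sq N a1 + exp (a2 \<bullet> x) * tangential_sq N a2" .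
  moreover have "0 \<le> 4 * \<epsilon> / (1 + x \<bullet> x)\<^sup>2 * tangential_sq N x"
    using tangential_sq_nonneg[OF unit, of x] pos(1) by simp
  ultimately have trace: "m * \<delta> - 2 * \<kappa> \<le> tangential_trace f1 f2 (\<lambda>v w. test_hess a1 a2 \<epsilon> x v \<bullet> w)"
    unfolding tangential_trace_test_hess[OF frame] \<kappa>_def by linarith
  have "(n \<bullet> N) * (N \<bullet> e3) = n \<bullet> e3"
    by (subst (2) eq_scaleR_normal_if_orthogonal[OF frame first[folded n_def]]) simp
  moreover have "n \<bullet> e3 = - \<kappa> * (x \<bullet> e3)"
    using horizontal unfolding n_def test_grad_def \<kappa>_def by (simp add: inner_add_left inner_diff_left)
  ultimately have normal: "(n \<bullet> N) * (\<phi>' * (N \<bullet> e3)) = - (\<kappa> * (x \<bullet> e3) * \<phi>')"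
    by (metis mult.commute mult.left_commute mult_minus_left)
  have "(x \<bullet> e3)\<^sup>2 \<le> x \<bullet> x"
    using Cauchy_Schwarz_ineq[of x e3] by (simp add: inner_axis_axis)
  from penalty_terms_small[OF pos(1,2) _ growth this small] pos(3,4)
  have "2 * \<kappa> + \<bar>\<kappa> * (x \<bullet> e3) * \<phi>'\<bar> < m * \<delta>"
    unfolding \<kappa>_def by simp
  with trace normal show ?thesis
    unfolding n_def using abs_ge_minus_self[of "\<kappa> * (x \<bullet> e3) * \<phi>'"] by linarith
qed

lemma test_fun_attains_max:
  fixes X :: "'m::topological_space \<Rightarrow> real^3"
  assumes contX: "continuous_on UNIV X" and proper: "proper_map X"
    and slab: "\<And>q. a1 \<bullet> X q \<le> b1" "\<And>q. a2 \<bullet> X q \<le> b2" and "K > 0"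
  obtains \<epsilon> m p where "0 < \<epsilon>" "0 < m" "\<epsilon> \<le> m * K" "m \<le> exp (a1 \<bullet> X p)" "m \<le> exp (a2 \<bullet> X p)"
    "\<And>q. test_fun a1 a2 \<epsilon> (X q) \<le> test_fun a1 a2 \<epsilon> (X p)"
proof -
  define \<Phi> where "\<Phi> x = (a1 \<bullet> x) + exp (a1 \<bullet> x) + (a2 \<bullet> x) + exp (a2 \<bullet> x)" for x :: "real^3"
  obtain p0 :: 'm where True by simp
  define m where "m = exp (\<Phi> (X p0) - 1 - \<bar>b1\<bar> - \<bar>b2\<bar> - exp b1 - exp b2)"
  define \<epsilon> where "\<epsilon> = min (1 / (1 + ln (1 + X p0 \<bullet> X p0))) (m * K)"
  have ln_nonneg: "0 \<le> ln (1 + x \<bullet> x)" for x :: "real^3" by simp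
  have "0 < m" unfolding m_def by simp
  then have "0 < \<epsilon>" unfolding \<epsilon>_def using \<open>K > 0\<close> ln_nonneg[of "X p0"] by (simp add: add_pos_nonneg)
  have test_fun: "test_fun a1 a2 \<epsilon> x = \<Phi> x - \<epsilon> * ln (1 + x \<bullet> x)" for x
    unfolding test_fun_def \<Phi>_def by simp
  have "continuous_on UNIV \<Phi>" unfolding \<Phi>_def by (intro continuous_intros)
  moreover have "\<Phi> (X q) \<le> b1 + exp b1 + b2 + exp b2" for q
    unfolding \<Phi>_def using slab[of q] by (intro add_mono) auto
  ultimately obtain p where max: "\<And>q. test_fun a1 a2 \<epsilon> (X q) \<le> test_fun a1 a2 \<epsilon> (X p)"
    using proper_map_penalized_attains_max[OF contX proper _ _ \<open>0 < \<epsilon>\<close>] unfolding test_fun by metis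
  \<comment> \<open>the penalty at p0 is at most 1, so \<Phi> drops by at most 1 from p0 to p\<close>
  have "\<epsilon> \<le> 1 / (1 + ln (1 + X p0 \<bullet> X p0))" unfolding \<epsilon>_def by simp
  then have "\<epsilon> * (1 + ln (1 + X p0 \<bullet> X p0)) \<le> 1"
    using ln_nonneg[of "X p0"] by (simp add: pos_le_divide_eq add_pos_nonneg)
  then have "\<Phi> (X p0) - 1 \<le> \<Phi> (X p)"
    using max[of p0] ln_nonneg[of "X p"] \<open>0 < \<epsilon>\<close> unfolding test_fun
    by (smt (verit) distrib_left mult_nonneg_nonneg)
  moreover have "exp (a1 \<bullet> X p) \<le> exp b1" "exp (a2 \<bullet> X p) \<le> exp b2" using slab[of p] by auto
  ultimately have "\<Phi> (X p0) - 1 - \<bar>b1\<bar> - \<bar>b2\<bar> - exp b1 - exp b2 \<le> a1 \<bullet> X p"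
      "\<Phi> (X p0) - 1 - \<bar>b1\<bar> - \<bar>b2\<bar> - exp b1 - exp b2 \<le> a2 \<bullet> X p"
    using slab[of p] abs_ge_self[of b1] abs_ge_self[of b2] unfolding \<Phi>_def[of "X p"] by linarith+
  then have "m \<le> exp (a1 \<bullet> X p)" "m \<le> exp (a2 \<bullet> X p)" unfolding m_def by simp_all
  moreover have "\<epsilon> \<le> m * K" unfolding \<epsilon>_def by simp
  ultimately show ?thesis using that \<open>0 < \<epsilon>\<close> \<open>0 < m\<close> max by blast
qed

theorem theoremB:
  fixes \<phi> :: "real \<Rightarrow> real"
    and X :: "'m::t2_space \<Rightarrow> real^3"
    and N :: "'m \<Rightarrow> real^3"
    and a1 a2 :: "real^3" and b1 b2 :: real
  assumes smooth: "\<forall>n x. ((deriv ^^ n) \<phi>) differentiable (at x)"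
    and growth: "\<exists>C>0. \<forall>t. \<bar>deriv \<phi> t\<bar> \<le> C * (1 + \<bar>t\<bar>)"
    and surf: "phi_minimal_surface \<phi> X N"
    and proper: "proper_map X"
    and a1: "a1 \<noteq> 0" "a1 \<bullet> e3 = 0"
    and a2: "a2 \<noteq> 0" "a2 \<bullet> e3 = 0"
    and nonpar: "\<not> (\<exists>c. a1 = c *\<^sub>R a2)"
  shows "\<not> (range X \<subseteq> {x. a1 \<bullet> x \<le> b1} \<inter> {x. a2 \<bullet> x \<le> b2})"
proof
  assume "range X \<subseteq> {x. a1 \<bullet> x \<le> b1} \<inter> {x. a2 \<bullet> x \<le> b2}"
  then have slab: "a1 \<bullet> X q \<le> b1" "a2 \<bullet> X q \<le> b2" for q by auto
  obtain C where C: "C > 0" "\<And>t. \<bar>deriv \<phi> t\<bar> \<le> C * (1 + \<bar>t\<bar>)" using growth by blast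
  obtain \<delta> where \<delta>: "\<delta> > 0" "\<And>N. norm N = 1 \<Longrightarrow> \<delta> \<le> tangential_sq N a1 + tangential_sq N a2"
    using tangential_sq_sum_bounded_below[OF a2(1) nonpar] by blast
  obtain \<epsilon> m p where \<epsilon>m: "0 < \<epsilon>" "0 < m" "\<epsilon> \<le> m * (\<delta> / (8 * (1 + C)))"
      "m \<le> exp (a1 \<bullet> X p)" "m \<le> exp (a2 \<bullet> X p)"
    and max: "\<And>q. test_fun a1 a2 \<epsilon> (X q) \<le> test_fun a1 a2 \<epsilon> (X p)"
    using test_fun_attains_max[OF phi_minimal_surface_continuous[OF surf] proper slab, of "\<delta> / (8 * (1 + C))"]
      \<delta>(1) C(1) by (auto simp: add_pos_pos)
  obtain f1 f2 where "normal_frame (N p) f1 f2"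
      "test_grad a1 a2 \<epsilon> (X p) \<bullet> f1 = 0" "test_grad a1 a2 \<epsilon> (X p) \<bullet> f2 = 0"
    and "tangential_trace f1 f2 (\<lambda>v w. test_hess a1 a2 \<epsilon> (X p) v \<bullet> w)
       + (test_grad a1 a2 \<epsilon> (X p) \<bullet> N p) * (deriv \<phi> (X p \<bullet> e3) * (N p \<bullet> e3)) \<le> 0"
    using phi_minimal_surface_max_principle[OF surf has_derivative_test_fun has_derivative_test_grad max] .
  moreover have "norm (N p) = 1" using surf unfolding phi_minimal_surface_def by blast
  ultimately show False
    using test_fun_surface_laplacian_pos[of "N p" f1 f2 a1 a2 \<epsilon> "X p" C m \<delta> "deriv \<phi> (X p \<bullet> e3)"]
      a1(2) a2(2) \<epsilon>m \<delta> C by (simp add: mult.commute)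
qed

end
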